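(* The category $\mathsf{DiGp}$ of digroups does not satisfy the (Huq=Smith) condition: there exist a digroup $X$ and congruences $R,S$ on $X$ such that $[I_R,I_S]=0$ but $[R,S]\neq 0$.
   Context: A digroup is a triple $(G,*,\circ)$ where $(G,* )$, $(G,\circ)$ are groups on the same set $G$ with the same identity $1$; morphisms are maps that are homomorphisms for both operations; products are computed componentwise. A congruence on a digroup $X$ is an equivalence relation $R\subseteq X\times X$ that is a sub-digroup of $X\times X$; $I_R=\{x\in X: x\,R\,1\}$, a sub-digroup of $X$. For sub-digroups $U,V$ of $X$, write $[U,V]=0$ (Huq commutation) if there exists a digroup morphism $\varphi\colon U\times V\to X$ with $\varphi(u,1)=u$ and $\varphi(1,v)=v$ for all $u\in U,v\in V$. For congruences $R,S$ on $X$, let $R\times_X S=\{(x,y,z)\in X^3: x\,R\,y,\ y\,S\,z\}$ (a sub-digroup of $X^3$); write $[R,S]=0$ (Smith commutation) if there exists a digroup morphism $p\colon R\times_X S\to X$ with $p(x,y,y)=x$ whenever $xRy$ and $p(y,y,z)=z$ whenever $ySz$. The category satisfies (Huq=Smith) if for every object $X$ and all congruences $R,S$ on $X$, $[I_R,I_S]=0$ implies $[R,S]=0$. *)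

theory Defs
  imports "HOL-Algebra.Group"
begin

record 'a dgr =
  dcar :: "'a set"
  op1 :: "'a \<Rightarrow> 'a \<Rightarrow> 'a"
  op2 :: "'a \<Rightarrow> 'a \<Rightarrow> 'a"
  dunit :: 'a

definition grp1 :: "'a dgr \<Rightarrow> 'a monoid" where
  "grp1 X = \<lparr>carrier = dcar X, mult = op1 X, one = dunit X\<rparr>"

definition grp2 :: "'a dgr \<Rightarrow> 'a monoid" where
  "grp2 X = \<lparr>carrier = dcar X, mult = op2 X, one = dunit X\<rparr>"

definition is_digroup :: "'a dgr \<Rightarrow> bool" where
  "is_digroup X \<longleftrightarrow> group (grp1 X) \<and> group (grp2 X)"

definition sub_digroup :: "'a set \<Rightarrow> 'a dgr \<Rightarrow> bool" where
  "sub_digroup U X \<longleftrightarrow> subgroup U (grp1 X) \<and> subgroup U (grp2 X)"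

definition dsub :: "'a dgr \<Rightarrow> 'a set \<Rightarrow> 'a dgr" where
  "dsub X U = \<lparr>dcar = U, op1 = op1 X, op2 = op2 X, dunit = dunit X\<rparr>"

definition dprod :: "'a dgr \<Rightarrow> 'b dgr \<Rightarrow> ('a \<times> 'b) dgr" where
  "dprod X Y = \<lparr>dcar = dcar X \<times> dcar Y,
     op1 = (\<lambda>(a, b) (c, d). (op1 X a c, op1 Y b d)),
     op2 = (\<lambda>(a, b) (c, d). (op2 X a c, op2 Y b d)),
     dunit = (dunit X, dunit Y)\<rparr>"

definition dhom :: "'a dgr \<Rightarrow> 'b dgr \<Rightarrow> ('a \<Rightarrow> 'b) \<Rightarrow> bool" where
  "dhom X Y f \<longleftrightarrow> f \<in> dcar X \<rightarrow> dcar Y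
     \<and> (\<forall>x\<in>dcar X. \<forall>y\<in>dcar X. f (op1 X x y) = op1 Y (f x) (f y))
     \<and> (\<forall>x\<in>dcar X. \<forall>y\<in>dcar X. f (op2 X x y) = op2 Y (f x) (f y))"

definition dcongruence :: "'a dgr \<Rightarrow> ('a \<times> 'a) set \<Rightarrow> bool" where
  "dcongruence X R \<longleftrightarrow> equiv (dcar X) R \<and> sub_digroup R (dprod X X)"

definition normal_part :: "'a dgr \<Rightarrow> ('a \<times> 'a) set \<Rightarrow> 'a set" where
  "normal_part X R = {x \<in> dcar X. (x, dunit X) \<in> R}"

definition huq_commute :: "'a dgr \<Rightarrow> 'a set \<Rightarrow> 'a set \<Rightarrow> bool" where
  "huq_commute X U V \<longleftrightarrow> (\<exists>\<phi>. dhom (dprod (dsub X U) (dsub X V)) X \<phi>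
      \<and> (\<forall>u\<in>U. \<phi> (u, dunit X) = u) \<and> (\<forall>v\<in>V. \<phi> (dunit X, v) = v))"

text \<open>R \<times>_X S, with triples (x,y,z) encoded as (x,(y,z)), inside X \<times> (X \<times> X).\<close>
definition rel_pullback :: "'a dgr \<Rightarrow> ('a \<times> 'a) set \<Rightarrow> ('a \<times> 'a) set \<Rightarrow> ('a \<times> 'a \<times> 'a) set" where
  "rel_pullback X R S = {(x, y, z). x \<in> dcar X \<and> y \<in> dcar X \<and> z \<in> dcar X
      \<and> (x, y) \<in> R \<and> (y, z) \<in> S}"

definition smith_commute :: "'a dgr \<Rightarrow> ('a \<times> 'a) set \<Rightarrow> ('a \<times> 'a) set \<Rightarrow> bool" where
  "smith_commute X R S \<longleftrightarrow> (\<exists>p. dhom (dsub (dprod X (dprod X X)) (rel_pullback X R S)) X p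
      \<and> (\<forall>x y. (x, y) \<in> R \<longrightarrow> p (x, y, y) = x)
      \<and> (\<forall>y z. (y, z) \<in> S \<longrightarrow> p (y, y, z) = z))"

end

theory Submission
  imports Defs "HOL-Algebra.Coset" "HOL-Combinatorics.Transposition"
begin

text \<open>Take \<open>\<int>/8\<close> with addition as the first operation and, as the second, addition
  conjugated by the transposition \<open>(5 7)\<close>; let \<open>R = S\<close> be congruence modulo 2. The
  transposition fixes the even residues, so both operations agree on \<open>I\<^sub>R = 2\<int>/8\<close>, which
  is abelian, and addition is a Huq commutator there. A Smith commutator \<open>p\<close>, being a
  morphism for either operation, must coincide on \<open>R \<times>\<^sub>X S\<close> with the Mal'tsev term
  \<open>x y\<^sup>-\<^sup>1 z\<close> of each of the two groups, since \<open>(x, y, z) = (x, y, y) (1, 1, y\<^sup>-\<^sup>1 z)\<close>.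
  At \<open>(7, 5, 7)\<close> these terms are \<open>1\<close> and \<open>3\<close>.\<close>

definition nat_mod_group :: "nat \<Rightarrow> nat monoid" where
  "nat_mod_group n = \<lparr>carrier = {..<n}, mult = (\<lambda>a b. (a + b) mod n), one = 0\<rparr>"

lemma nat_mod_group_simps [simp]:
  "carrier (nat_mod_group n) = {..<n}"
  "mult (nat_mod_group n) = (\<lambda>a b. (a + b) mod n)"
  "one (nat_mod_group n) = 0"
  by (simp_all add: nat_mod_group_def)

lemma comm_group_nat_mod_group:
  assumes "0 < n"
  shows "comm_group (nat_mod_group n)"
proof (rule comm_groupI)
  fix x assume "x \<in> carrier (nat_mod_group n)"
  then show "\<exists>y\<in>carrier (nat_mod_group n). y \<otimes>\<^bsub>nat_mod_group n\<^esub> x = \<one>\<^bsub>nat_mod_group n\<^esub>"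
    using assms by (intro bexI[where x = "(n - x) mod n"]) (auto simp: mod_add_left_eq)
qed (use assms in \<open>auto simp: mod_add_left_eq mod_add_right_eq add_ac\<close>)

lemma group_nat_mod_group: "0 < n \<Longrightarrow> group (nat_mod_group n)"
  using comm_group_nat_mod_group by (simp add: comm_group_def)

lemma inv_nat_mod_group:
  assumes "x < n"
  shows "inv\<^bsub>nat_mod_group n\<^esub> x = (n - x) mod n"
  using assms by (intro group.inv_equality group_nat_mod_group) (auto simp: mod_add_left_eq)

lemma mod_hom_nat_mod_group:
  assumes "m dvd n" "0 < m"
  shows "(\<lambda>x. x mod m) \<in> hom (nat_mod_group n) (nat_mod_group m)"
  using assms by (auto intro!: homI simp: mod_mod_cancel mod_add_eq)

definition twist :: "('a, 'b) monoid_scheme \<Rightarrow> ('a \<Rightarrow> 'a) \<Rightarrow> 'a monoid" where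
  "twist G \<sigma> = \<lparr>carrier = carrier G, mult = (\<lambda>a b. \<sigma> (\<sigma> a \<otimes>\<^bsub>G\<^esub> \<sigma> b)), one = \<sigma> \<one>\<^bsub>G\<^esub>\<rparr>"

lemma twist_simps [simp]:
  "carrier (twist G \<sigma>) = carrier G"
  "mult (twist G \<sigma>) = (\<lambda>a b. \<sigma> (\<sigma> a \<otimes>\<^bsub>G\<^esub> \<sigma> b))"
  "one (twist G \<sigma>) = \<sigma> \<one>\<^bsub>G\<^esub>"
  by (simp_all add: twist_def)

locale involution_on_group = group G for G (structure) +
  fixes \<sigma> :: "'a \<Rightarrow> 'a"
  assumes maps_carrier: "x \<in> carrier G \<Longrightarrow> \<sigma> x \<in> carrier G"
    and involutory: "x \<in> carrier G \<Longrightarrow> \<sigma> (\<sigma> x) = x"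
begin

lemma group_twist: "group (twist G \<sigma>)"
proof (rule groupI)
  fix x assume "x \<in> carrier (twist G \<sigma>)"
  then show "\<exists>y\<in>carrier (twist G \<sigma>). y \<otimes>\<^bsub>twist G \<sigma>\<^esub> x = \<one>\<^bsub>twist G \<sigma>\<^esub>"
    by (intro bexI[where x = "\<sigma> (inv (\<sigma> x))"]) (auto simp: maps_carrier involutory)
qed (auto simp: maps_carrier involutory m_assoc)

lemma inv_twist:
  assumes "x \<in> carrier G"
  shows "inv\<^bsub>twist G \<sigma>\<^esub> x = \<sigma> (inv (\<sigma> x))"
  using assms by (intro group.inv_equality[OF group_twist]) (auto simp: maps_carrier involutory)

lemma hom_twist:
  assumes "h \<in> hom G H" "\<And>x. x \<in> carrier G \<Longrightarrow> h (\<sigma> x) = h x"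
  shows "h \<in> hom (twist G \<sigma>) H"
  using assms by (auto intro!: homI simp: hom_in_carrier hom_mult maps_carrier)

end

lemma grp1_dprod: "grp1 (dprod X Y) = grp1 X \<times>\<times> grp1 Y"
  by (simp add: grp1_def dprod_def DirProd_def)

lemma grp2_dprod: "grp2 (dprod X Y) = grp2 X \<times>\<times> grp2 Y"
  by (simp add: grp2_def dprod_def DirProd_def)

definition twisted_digroup :: "'a monoid \<Rightarrow> ('a \<Rightarrow> 'a) \<Rightarrow> 'a dgr" where
  "twisted_digroup G \<sigma> =
     \<lparr>dcar = carrier G, op1 = mult G, op2 = mult (twist G \<sigma>), dunit = \<one>\<^bsub>G\<^esub>\<rparr>"

lemma grp1_twisted_digroup: "grp1 (twisted_digroup G \<sigma>) = G"
  by (simp add: grp1_def twisted_digroup_def)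

lemma grp2_twisted_digroup: "\<sigma> \<one>\<^bsub>G\<^esub> = \<one>\<^bsub>G\<^esub> \<Longrightarrow> grp2 (twisted_digroup G \<sigma>) = twist G \<sigma>"
  by (simp add: grp2_def twisted_digroup_def twist_def)

lemma is_digroup_twisted_digroup:
  fixes G :: "'a monoid"
  assumes "involution_on_group G \<sigma>" "\<sigma> \<one>\<^bsub>G\<^esub> = \<one>\<^bsub>G\<^esub>"
  shows "is_digroup (twisted_digroup G \<sigma>)"
  using assms involution_on_group.group_twist involution_on_group_def
  by (auto simp: is_digroup_def grp1_twisted_digroup grp2_twisted_digroup)

definition kernel_pair :: "'a set \<Rightarrow> ('a \<Rightarrow> 'b) \<Rightarrow> ('a \<times> 'a) set" where
  "kernel_pair A h = {(x, y) \<in> A \<times> A. h x = h y}"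

lemma equiv_kernel_pair: "equiv A (kernel_pair A h)"
  by (auto simp: equiv_def refl_on_def sym_def trans_def kernel_pair_def)

lemma subgroup_kernel_pair:
  assumes "group G" "group H" "h \<in> hom G H"
  shows "subgroup (kernel_pair (carrier G) h) (G \<times>\<times> G)"
proof -
  interpret group_hom G H h
    using assms by (simp add: group_hom_def group_hom_axioms_def)
  show ?thesis
  proof (rule group.subgroupI[OF DirProd_group[OF assms(1,1)]])
    show "kernel_pair (carrier G) h \<noteq> {}"
      by (auto simp: kernel_pair_def)
  qed (auto simp: kernel_pair_def)
qed

lemma dcongruence_kernel_pair:
  assumes "is_digroup X" "group H\<^sub>1" "group H\<^sub>2" "h \<in> hom (grp1 X) H\<^sub>1" "h \<in> hom (grp2 X) H\<^sub>2"
  shows "dcongruence X (kernel_pair (dcar X) h)"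
  using assms subgroup_kernel_pair[of "grp1 X" H\<^sub>1 h] subgroup_kernel_pair[of "grp2 X" H\<^sub>2 h]
  by (simp add: dcongruence_def sub_digroup_def is_digroup_def grp1_dprod grp2_dprod
      equiv_kernel_pair) (simp add: grp1_def grp2_def)

lemma normal_part_kernel_pair:
  assumes "is_digroup X" "group H" "h \<in> hom (grp1 X) H"
  shows "normal_part X (kernel_pair (dcar X) h) = kernel (grp1 X) H h"
proof -
  interpret group_hom "grp1 X" H h
    using assms by (simp add: group_hom_def group_hom_axioms_def is_digroup_def)
  have "dunit X \<in> dcar X" "h (dunit X) = \<one>\<^bsub>H\<^esub>"
    using G.one_closed hom_one by (simp_all add: grp1_def)
  then show ?thesis
    by (auto simp: normal_part_def kernel_pair_def kernel_def grp1_def)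
qed

lemma huq_commute_if_ops_agree_on_abelian_subgroup:
  assumes "is_digroup X" "subgroup W (grp1 X)"
    and comm: "\<And>a b. a \<in> W \<Longrightarrow> b \<in> W \<Longrightarrow> op1 X a b = op1 X b a"
    and agree: "\<And>a b. a \<in> W \<Longrightarrow> b \<in> W \<Longrightarrow> op2 X a b = op1 X a b"
    and "U \<subseteq> W" "V \<subseteq> W"
  shows "huq_commute X U V"
proof -
  interpret G: group "grp1 X"
    using assms(1) by (simp add: is_digroup_def)
  have W: "a \<in> W \<Longrightarrow> a \<in> dcar X" "a \<in> W \<Longrightarrow> b \<in> W \<Longrightarrow> op1 X a b \<in> W" for a b
    using subgroup.subset[OF assms(2)] subgroup.m_closed[OF assms(2)] by (auto simp: grp1_def)
  have interchange: "op1 X (op1 X a b) (op1 X c d) = op1 X (op1 X a c) (op1 X b d)"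
    if "a \<in> W" "b \<in> W" "c \<in> W" "d \<in> W" for a b c d
  proof -
    have assoc: "op1 X (op1 X x y) z = op1 X x (op1 X y z)" if "x \<in> W" "y \<in> W" "z \<in> W" for x y z
      using that W G.m_assoc by (simp add: grp1_def)
    show ?thesis
      using that W assoc comm[of b c] by metis
  qed
  have unit: "op1 X a (dunit X) = a" "op1 X (dunit X) a = a" if "a \<in> W" for a
    using that W G.r_one G.l_one by (simp_all add: grp1_def)
  show ?thesis
    unfolding huq_commute_def
  proof (intro exI[where x = "\<lambda>(u, v). op1 X u v"] conjI ballI)
    show "dhom (dprod (dsub X U) (dsub X V)) X (\<lambda>(u, v). op1 X u v)"
      using assms(5,6) W interchange
      by (auto simp: dhom_def dprod_def dsub_def agree subset_iff)
  qed (use assms(5,6) unit in auto)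
qed

lemma pullback_hom_eq_malcev_term:
  fixes G (structure)
  assumes "group G"
    and S: "subgroup S (G \<times>\<times> G)" "\<And>y. y \<in> carrier G \<Longrightarrow> (y, y) \<in> S"
    and R: "(\<one>\<^bsub>G\<^esub>, \<one>\<^bsub>G\<^esub>) \<in> R"
    and hom: "\<And>a b. a \<in> P \<Longrightarrow> b \<in> P \<Longrightarrow> p (a \<otimes>\<^bsub>G \<times>\<times> (G \<times>\<times> G)\<^esub> b) = p a \<otimes>\<^bsub>G\<^esub> p b"
    and P: "P = {(x, y, z). x \<in> carrier G \<and> y \<in> carrier G \<and> z \<in> carrier G
                  \<and> (x, y) \<in> R \<and> (y, z) \<in> S}"
    and left: "\<And>x y. (x, y) \<in> R \<Longrightarrow> p (x, y, y) = x"
    and right: "\<And>y z. (y, z) \<in> S \<Longrightarrow> p (y, y, z) = z"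
    and xyz: "(x, y) \<in> R" "(y, z) \<in> S" "x \<in> carrier G" "y \<in> carrier G" "z \<in> carrier G"
  shows "p (x, y, z) = x \<otimes>\<^bsub>G\<^esub> (inv\<^bsub>G\<^esub> y \<otimes>\<^bsub>G\<^esub> z)"
proof -
  interpret group G by fact
  define w where "w = inv y \<otimes> z"
  have w: "w \<in> carrier G" "y \<otimes> w = z"
    using xyz by (simp_all add: w_def m_assoc[symmetric])
  have "(inv y, inv y) \<otimes>\<^bsub>G \<times>\<times> G\<^esub> (y, z) \<in> S"
    using S xyz by (intro subgroup.m_closed) auto
  then have "(\<one>, w) \<in> S"
    using xyz by (simp add: w_def)
  then have "(x, y, y) \<in> P" "(\<one>, \<one>, w) \<in> P"
    using P R S xyz w by auto
  have "p (x, y, z) = p ((x, y, y) \<otimes>\<^bsub>G \<times>\<times> (G \<times>\<times> G)\<^esub> (\<one>, \<one>, w))"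
    using xyz w by simp
  also have "\<dots> = p (x, y, y) \<otimes> p (\<one>, \<one>, w)"
    by (rule hom) fact+
  also have "\<dots> = x \<otimes> w"
    using left right xyz \<open>(\<one>, w) \<in> S\<close> by simp
  finally show ?thesis
    by (simp add: w_def)
qed

lemma smith_commute_imp_malcev_terms_eq:
  assumes "is_digroup X" "dcongruence X R" "dcongruence X S" "smith_commute X R S"
    and "(x, y) \<in> R" "(y, z) \<in> S"
  shows "op1 X x (op1 X (inv\<^bsub>grp1 X\<^esub> y) z) = op2 X x (op2 X (inv\<^bsub>grp2 X\<^esub> y) z)"
proof -
  obtain p where p: "dhom (dsub (dprod X (dprod X X)) (rel_pullback X R S)) X p"
    and left: "\<And>x y. (x, y) \<in> R \<Longrightarrow> p (x, y, y) = x"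
    and right: "\<And>y z. (y, z) \<in> S \<Longrightarrow> p (y, y, z) = z"
    using assms(4) by (auto simp: smith_commute_def)
  have R: "equiv (dcar X) R"
    and S: "equiv (dcar X) S" "sub_digroup S (dprod X X)"
    using assms(2,3) by (simp_all add: dcongruence_def)
  have xyz: "x \<in> dcar X" "y \<in> dcar X" "z \<in> dcar X"
    using R S(1) assms(5,6) by (auto dest: equiv_class_eq_iff[THEN iffD1])
  have "dunit X \<in> dcar X"
    using assms(1) monoid.one_closed[of "grp1 X"] by (simp add: is_digroup_def group_def grp1_def)
  have "p (x, y, z) = x \<otimes>\<^bsub>G\<^esub> (inv\<^bsub>G\<^esub> y \<otimes>\<^bsub>G\<^esub> z)" if G: "G = grp1 X \<or> G = grp2 X" for G
  proof (rule pullback_hom_eq_malcev_term[where R = R and S = S and P = "rel_pullback X R S"])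
    show "group G" "subgroup S (G \<times>\<times> G)"
      using G assms(1) S(2) by (auto simp: is_digroup_def sub_digroup_def grp1_dprod grp2_dprod)
  qed (use G R S(1) p left right assms(5,6) xyz \<open>dunit X \<in> dcar X\<close> in
        \<open>auto simp: grp1_def grp2_def dhom_def dsub_def dprod_def rel_pullback_def equiv_def
           refl_on_def\<close>)
  from this[of "grp1 X"] this[of "grp2 X"] show ?thesis
    by (simp add: grp1_def grp2_def)
qed

lemma involution_on_group_transpose:
  assumes "a < n" "b < n"
  shows "involution_on_group (nat_mod_group n) (Transposition.transpose a b)"
  using assms group_nat_mod_group[of n]
  by (auto simp: involution_on_group_def involution_on_group_axioms_def transpose_def)

definition twisted_Z8 :: "nat dgr" where
  "twisted_Z8 = twisted_digroup (nat_mod_group 8) (Transposition.transpose 5 7)"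

definition parity_congruence :: "(nat \<times> nat) set" where
  "parity_congruence = kernel_pair {..<8} (\<lambda>x. x mod 2)"

lemma involution_on_Z8: "involution_on_group (nat_mod_group 8) (Transposition.transpose 5 7)"
  by (rule involution_on_group_transpose) simp_all

lemma grp1_twisted_Z8: "grp1 twisted_Z8 = nat_mod_group 8"
  by (simp add: twisted_Z8_def grp1_twisted_digroup)

lemma grp2_twisted_Z8: "grp2 twisted_Z8 = twist (nat_mod_group 8) (Transposition.transpose 5 7)"
  by (simp add: twisted_Z8_def grp2_twisted_digroup)

lemma twisted_Z8_simps:
  "dcar twisted_Z8 = {..<8}"
  "op1 twisted_Z8 = (\<lambda>a b. (a + b) mod 8)"
  "op2 twisted_Z8 = (\<lambda>a b. Transposition.transpose 5 7
     ((Transposition.transpose 5 7 a + Transposition.transpose 5 7 b) mod 8))"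
  by (simp_all add: twisted_Z8_def twisted_digroup_def)

lemma is_digroup_twisted_Z8: "is_digroup twisted_Z8"
  unfolding twisted_Z8_def by (rule is_digroup_twisted_digroup[OF involution_on_Z8]) simp

lemma parity_hom_twisted_Z8:
  "(\<lambda>x. x mod 2) \<in> hom (grp1 twisted_Z8) (nat_mod_group 2)"
  "(\<lambda>x. x mod 2) \<in> hom (grp2 twisted_Z8) (nat_mod_group 2)"
  using mod_hom_nat_mod_group[of 2 8]
  by (auto simp: grp1_twisted_Z8 grp2_twisted_Z8 transpose_def
      intro!: involution_on_group.hom_twist[OF involution_on_Z8])

lemma dcongruence_parity: "dcongruence twisted_Z8 parity_congruence"
  using dcongruence_kernel_pair[OF is_digroup_twisted_Z8 _ _ parity_hom_twisted_Z8]
  by (simp add: parity_congruence_def group_nat_mod_group twisted_Z8_simps(1))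

lemma normal_part_parity:
  "normal_part twisted_Z8 parity_congruence = kernel (nat_mod_group 8) (nat_mod_group 2) (\<lambda>x. x mod 2)"
  using normal_part_kernel_pair[OF is_digroup_twisted_Z8 _ parity_hom_twisted_Z8(1)]
  by (simp add: group_nat_mod_group parity_congruence_def grp1_twisted_Z8 twisted_Z8_simps(1))

lemma op2_twisted_Z8_even:
  assumes "even a" "even b"
  shows "op2 twisted_Z8 a b = (a + b) mod 8"
proof -
  have "even ((a + b) mod 8)"
    using assms by (metis dvd_mod_iff even_add even_numeral)
  then show ?thesis
    using assms by (auto simp: twisted_Z8_simps transpose_def)
qed

lemma huq_commute_parity:
  "huq_commute twisted_Z8 (normal_part twisted_Z8 parity_congruence)
     (normal_part twisted_Z8 parity_congruence)"
proof (rule huq_commute_if_ops_agree_on_abelian_subgroup[OF is_digroup_twisted_Z8])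
  show "subgroup (normal_part twisted_Z8 parity_congruence) (grp1 twisted_Z8)"
    using parity_hom_twisted_Z8(1)
    by (simp add: normal_part_parity grp1_twisted_Z8 group_hom.subgroup_kernel group_hom_def
        group_hom_axioms_def group_nat_mod_group)
qed (auto simp: normal_part_parity kernel_def twisted_Z8_simps(2) op2_twisted_Z8_even add.commute)

lemma not_smith_commute_parity: "\<not> smith_commute twisted_Z8 parity_congruence parity_congruence"
proof
  assume "smith_commute twisted_Z8 parity_congruence parity_congruence"
  then have "op1 twisted_Z8 7 (op1 twisted_Z8 (inv\<^bsub>grp1 twisted_Z8\<^esub> 5) 7)
      = op2 twisted_Z8 7 (op2 twisted_Z8 (inv\<^bsub>grp2 twisted_Z8\<^esub> 5) 7)"
    by (rule smith_commute_imp_malcev_terms_eq[OF is_digroup_twisted_Z8 dcongruence_parity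
          dcongruence_parity]) (auto simp: parity_congruence_def kernel_pair_def)
  moreover have "inv\<^bsub>grp1 twisted_Z8\<^esub> 5 = 3"
    by (simp add: grp1_twisted_Z8 inv_nat_mod_group)
  moreover have "inv\<^bsub>grp2 twisted_Z8\<^esub> 5 = 1"
    by (simp add: grp2_twisted_Z8 involution_on_group.inv_twist[OF involution_on_Z8]
        inv_nat_mod_group)
  ultimately show False
    by (simp add: twisted_Z8_simps)
qed

theorem proposition3p6:
  shows "\<exists>(X :: nat dgr) R S. is_digroup X \<and> dcongruence X R \<and> dcongruence X S
           \<and> huq_commute X (normal_part X R) (normal_part X S)
           \<and> \<not> smith_commute X R S"
  using is_digroup_twisted_Z8 dcongruence_parity huq_commute_parity not_smith_commute_parity
  by blast

end
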